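(* Let $\bm{\mathcal{X}}\in\mathbb{R}^{n\times r\times k}$, $\bm{\mathcal{U}}_t\in\mathbb{R}^{n\times R\times k}$ and $\bm{\mathcal{U}}_{t+1}=[\bm{\mathcal{I}}+\mu(\mathcal{A}^*\mathcal{A})(\bm{\mathcal{X}}*\bm{\mathcal{X}}^\top-\bm{\mathcal{U}}_t*\bm{\mathcal{U}}_t^\top)]*\bm{\mathcal{U}}_t$. Assume $\|\bm{\mathcal{U}}_t\|\le 3\|\bm{\mathcal{X}}\|$, $\mu\le\frac{1}{27}\|\bm{\mathcal{X}}\|^{-2}$, and $\|(\mathcal{A}^*\mathcal{A}-\mathcal{I})(\bm{\mathcal{X}}*\bm{\mathcal{X}}^\top-\bm{\mathcal{U}}_t*\bm{\mathcal{U}}_t^\top)\|\le\|\bm{\mathcal{X}}\|^2$. Then $\|\bm{\mathcal{U}}_{t+1}\|\le 3\|\bm{\mathcal{X}}\|$.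
   Context: All tensors are real third-order with third mode of length $k$. The t-product $*$ is tube-wise circular convolution: $(\bm{\mathcal{A}}*\bm{\mathcal{B}})(i,i',:)=\sum_p\bm{\mathcal{A}}(i,p,:)\circledast\bm{\mathcal{B}}(p,i',:)$; equivalently, with Fourier slices $\overline{\bm{\mathcal{T}}}^{(j)}(i,i')=\sum_{j'}\bm{\mathcal{T}}(i,i',j')e^{-\sqrt{-1}\,2\pi(j-1)(j'-1)/k}$ and $\overline{\bm{\mathcal{T}}}=\mathrm{blockdiag}(\overline{\bm{\mathcal{T}}}^{(j)})_j$, $\overline{\bm{\mathcal{A}}*\bm{\mathcal{B}}}=\overline{\bm{\mathcal{A}}}\,\overline{\bm{\mathcal{B}}}$. The transpose transposes each frontal slice and reverses slices $2,\dots,k$. $\bm{\mathcal{I}}$ is the identity tensor, $\mathcal{I}$ the identity operator. $\|\bm{\mathcal{T}}\|=\|\overline{\bm{\mathcal{T}}}\|$. $\mathcal{A}^*\mathcal{A}(\bm{\mathcal{Z}})=\sum_i\langle\bm{\mathcal{A}}_i,\bm{\mathcal{Z}}\rangle\bm{\mathcal{A}}_i$ for fixed tubal-symmetric $\bm{\mathcal{A}}_i\in\mathbb{R}^{n\times n\times k}$, with $\langle\cdot,\cdot\rangle$ the entrywise inner product. *)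

theory Defs
  imports "HOL-Analysis.Analysis"
begin

text \<open>Real third-order tensors, indexed from 0: entry (i,i',j) with i < nr,
  i' < nc, j < k (tube length k). Values outside the index box are irrelevant.\<close>
type_synonym tensor = "nat \<Rightarrow> nat \<Rightarrow> nat \<Rightarrow> real"

definition tprod :: "nat \<Rightarrow> nat \<Rightarrow> tensor \<Rightarrow> tensor \<Rightarrow> tensor" where
  "tprod k m A B = (\<lambda>i i' j. \<Sum>p<m. \<Sum>l<k. A i p l * B p i' ((j + k - l) mod k))"

text \<open>Transpose: transpose each frontal slice and reverse slices 2..k.\<close>
definition ttrans :: "nat \<Rightarrow> tensor \<Rightarrow> tensor" where
  "ttrans k T = (\<lambda>i i' j. T i' i ((k - j) mod k))"

definition tid :: tensor where
  "tid = (\<lambda>i i' j. if i = i' \<and> j = 0 then 1 else 0)"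

definition fslice :: "nat \<Rightarrow> tensor \<Rightarrow> nat \<Rightarrow> nat \<Rightarrow> nat \<Rightarrow> complex" where
  "fslice k T j i i' = (\<Sum>j'<k. complex_of_real (T i i' j') * cis (- 2 * pi * real j * real j' / real k))"

text \<open>Block-diagonal matrix of Fourier slices, of size (m*k) x (p*k) for an m x p x k tensor.\<close>
definition bdiag :: "nat \<Rightarrow> nat \<Rightarrow> nat \<Rightarrow> tensor \<Rightarrow> nat \<Rightarrow> nat \<Rightarrow> complex" where
  "bdiag k m p T a b = (if a div m = b div p then fslice k T (a div m) (a mod m) (b mod p) else 0)"

definition copnorm :: "nat \<Rightarrow> nat \<Rightarrow> (nat \<Rightarrow> nat \<Rightarrow> complex) \<Rightarrow> real" where
  "copnorm nr nc M = Sup {sqrt (\<Sum>i<nr. (cmod (\<Sum>j<nc. M i j * x j))^2) | x.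
       (\<Sum>j<nc. (cmod (x j))^2) \<le> 1}"

text \<open>Tensor spectral norm of an m x p x k tensor: norm of the block-diagonal Fourier matrix.\<close>
definition tnorm :: "nat \<Rightarrow> nat \<Rightarrow> nat \<Rightarrow> tensor \<Rightarrow> real" where
  "tnorm k m p T = copnorm (m * k) (p * k) (bdiag k m p T)"

definition tinner :: "nat \<Rightarrow> nat \<Rightarrow> tensor \<Rightarrow> tensor \<Rightarrow> real" where
  "tinner n k A B = (\<Sum>i<n. \<Sum>i'<n. \<Sum>j<k. A i i' j * B i i' j)"

definition AstarA :: "nat \<Rightarrow> nat \<Rightarrow> nat \<Rightarrow> (nat \<Rightarrow> tensor) \<Rightarrow> tensor \<Rightarrow> tensor" where
  "AstarA n k N As Z = (\<lambda>i i' j. \<Sum>q<N. tinner n k (As q) Z * As q i i' j)"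

definition tubal_sym :: "nat \<Rightarrow> nat \<Rightarrow> tensor \<Rightarrow> bool" where
  "tubal_sym n k T \<longleftrightarrow> (\<forall>i<n. \<forall>i'<n. \<forall>j<k. ttrans k T i i' j = T i i' j)"

end

theory Submission
  imports Defs
begin

(* In the Fourier domain the t-product becomes the product of the block-diagonal matrices of
   Fourier slices and the t-transpose becomes the conjugate transpose.  Writing M, X and E for the
   block-diagonal matrices of U_t, X and of the error term (A*A - I)(X X^T - U_t U_t^T), the next
   iterate is M - mu M M^H M + mu (E + X X^H) M.  The first part has norm at most s (1 - mu s^2),
   where s = |M|, because t (1 - mu t^2) is increasing for 3 mu t^2 <= 1; the second has norm at
   most 2 mu |X|^2 s; and s (1 - mu s^2) + 2 mu |X|^2 s <= 3 |X| whenever s <= 3 |X| and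
   27 mu |X|^2 <= 1. *)

definition cvec_norm :: "nat \<Rightarrow> (nat \<Rightarrow> complex) \<Rightarrow> real" where
  "cvec_norm n x = L2_set (\<lambda>i. cmod (x i)) {..<n}"

definition cvec_inner :: "nat \<Rightarrow> (nat \<Rightarrow> complex) \<Rightarrow> (nat \<Rightarrow> complex) \<Rightarrow> complex" where
  "cvec_inner n x y = (\<Sum>i<n. x i * cnj (y i))"

definition cmat_vec :: "nat \<Rightarrow> (nat \<Rightarrow> nat \<Rightarrow> complex) \<Rightarrow> (nat \<Rightarrow> complex) \<Rightarrow> nat \<Rightarrow> complex" where
  "cmat_vec nc M x = (\<lambda>i. \<Sum>j<nc. M i j * x j)"

definition cmat_adj_vec :: "nat \<Rightarrow> (nat \<Rightarrow> nat \<Rightarrow> complex) \<Rightarrow> (nat \<Rightarrow> complex) \<Rightarrow> nat \<Rightarrow> complex" where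
  "cmat_adj_vec nr M y = (\<lambda>j. \<Sum>i<nr. cnj (M i j) * y i)"

lemma cvec_norm_nonneg: "0 \<le> cvec_norm n x"
  by (simp add: cvec_norm_def)

lemma cvec_norm_eq_0_iff: "cvec_norm n x = 0 \<longleftrightarrow> (\<forall>i<n. x i = 0)"
  by (auto simp: cvec_norm_def L2_set_eq_0_iff)

lemma cvec_norm_zero [simp]: "cvec_norm n (\<lambda>_. 0) = 0"
  by (simp add: cvec_norm_eq_0_iff)

lemma cvec_norm_cong: "(\<And>i. i < n \<Longrightarrow> x i = y i) \<Longrightarrow> cvec_norm n x = cvec_norm n y"
  unfolding cvec_norm_def by (rule L2_set_cong) auto

lemma norm_le_cvec_norm: "i < n \<Longrightarrow> cmod (x i) \<le> cvec_norm n x"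
  unfolding cvec_norm_def by (rule member_le_L2_set) auto

lemma cvec_norm_triangle: "cvec_norm n (\<lambda>i. x i + y i) \<le> cvec_norm n x + cvec_norm n y"
proof -
  have "cvec_norm n (\<lambda>i. x i + y i) \<le> L2_set (\<lambda>i. cmod (x i) + cmod (y i)) {..<n}"
    unfolding cvec_norm_def by (rule L2_set_mono) (auto intro: norm_triangle_ineq)
  also have "\<dots> \<le> cvec_norm n x + cvec_norm n y"
    unfolding cvec_norm_def by (rule L2_set_triangle_ineq)
  finally show ?thesis .
qed

lemma cvec_norm_scale: "cvec_norm n (\<lambda>i. c * x i) = cmod c * cvec_norm n x"
  by (simp add: cvec_norm_def L2_set_right_distrib norm_mult)

lemma power2_cvec_norm_eq_sum: "(cvec_norm n x)\<^sup>2 = (\<Sum>i<n. (cmod (x i))\<^sup>2)"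
  by (simp add: cvec_norm_def L2_set_def sum_nonneg)

lemma power2_cvec_norm: "(cvec_norm n x)\<^sup>2 = Re (cvec_inner n x x)"
proof -
  have "(cmod (x i))\<^sup>2 = Re (x i * cnj (x i))" for i
    by (simp add: cmod_power2 power2_eq_square[symmetric])
  then show ?thesis
    by (simp add: power2_cvec_norm_eq_sum cvec_inner_def Re_sum)
qed

lemma cnj_cvec_inner: "cnj (cvec_inner n x y) = cvec_inner n y x"
  by (simp add: cvec_inner_def mult.commute)

lemma cvec_inner_cauchy_schwarz: "cmod (cvec_inner n x y) \<le> cvec_norm n x * cvec_norm n y"
proof -
  have "cmod (cvec_inner n x y) \<le> (\<Sum>i<n. cmod (x i) * cmod (y i))"
    unfolding cvec_inner_def by (rule order_trans[OF norm_sum]) (simp add: norm_mult)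
  also have "\<dots> \<le> cvec_norm n x * cvec_norm n y"
    unfolding cvec_norm_def using L2_set_mult_ineq[of "\<lambda>i. cmod (x i)" "\<lambda>i. cmod (y i)"] by simp
  finally show ?thesis .
qed

lemma power2_cvec_norm_diff:
  fixes a b :: real and x y :: "nat \<Rightarrow> complex"
  shows "(cvec_norm n (\<lambda>i. a * x i - b * y i))\<^sup>2
     = a\<^sup>2 * (cvec_norm n x)\<^sup>2 - 2 * a * b * Re (cvec_inner n x y) + b\<^sup>2 * (cvec_norm n y)\<^sup>2"
proof -
  have "(cmod (a * x i - b * y i))\<^sup>2
      = a\<^sup>2 * (cmod (x i))\<^sup>2 - 2 * a * b * Re (x i * cnj (y i)) + b\<^sup>2 * (cmod (y i))\<^sup>2" for i
    unfolding cmod_power2 by (simp add: power2_eq_square algebra_simps)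
  then have "(cvec_norm n (\<lambda>i. a * x i - b * y i))\<^sup>2
      = (\<Sum>i<n. a\<^sup>2 * (cmod (x i))\<^sup>2 - 2 * a * b * Re (x i * cnj (y i)) + b\<^sup>2 * (cmod (y i))\<^sup>2)"
    by (simp only: power2_cvec_norm_eq_sum)
  also have "\<dots> = a\<^sup>2 * (\<Sum>i<n. (cmod (x i))\<^sup>2) - 2 * a * b * (\<Sum>i<n. Re (x i * cnj (y i)))
      + b\<^sup>2 * (\<Sum>i<n. (cmod (y i))\<^sup>2)"
    by (simp only: sum.distrib sum_subtractf sum_distrib_left)
  finally show ?thesis
    by (simp only: power2_cvec_norm_eq_sum cvec_inner_def Re_sum)
qed

lemma cvec_inner_cmat_vec: "cvec_inner nr (cmat_vec nc M x) y = cvec_inner nc x (cmat_adj_vec nr M y)"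
  unfolding cvec_inner_def cmat_vec_def cmat_adj_vec_def
  by (simp add: sum_distrib_left sum_distrib_right mult_ac sum.swap[of _ "{..<nr}"])

lemma cmat_vec_scale: "cmat_vec nc M (\<lambda>j. c * x j) = (\<lambda>i. c * cmat_vec nc M x i)"
  unfolding cmat_vec_def by (simp add: sum_distrib_left mult_ac)

lemma cmat_vec_diff:
  "cmat_vec nc M (\<lambda>j. a * x j - b * y j) = (\<lambda>i. a * cmat_vec nc M x i - b * cmat_vec nc M y i)"
  unfolding cmat_vec_def by (simp add: sum_distrib_left sum_subtractf algebra_simps)

lemma copnorm_eq_Sup: "copnorm nr nc M = Sup {cvec_norm nr (cmat_vec nc M x) | x. cvec_norm nc x \<le> 1}"
proof -
  have "cvec_norm nc x \<le> 1 \<longleftrightarrow> (\<Sum>j<nc. (cmod (x j))\<^sup>2) \<le> 1" for x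
    by (simp add: cvec_norm_def L2_set_def)
  then show ?thesis
    by (simp add: copnorm_def cvec_norm_def L2_set_def cmat_vec_def)
qed

lemma copnorm_upper:
  assumes "cvec_norm nc x \<le> 1"
  shows "cvec_norm nr (cmat_vec nc M x) \<le> copnorm nr nc M"
  unfolding copnorm_eq_Sup
proof (rule cSup_upper)
  have "cvec_norm nr (cmat_vec nc M y) \<le> (\<Sum>i<nr. \<Sum>j<nc. cmod (M i j))" if "cvec_norm nc y \<le> 1" for y
  proof -
    have "cvec_norm nr (cmat_vec nc M y) \<le> (\<Sum>i<nr. cmod (cmat_vec nc M y i))"
      unfolding cvec_norm_def by (rule L2_set_le_sum) auto
    also have "\<dots> \<le> (\<Sum>i<nr. \<Sum>j<nc. cmod (M i j) * cmod (y j))"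
      unfolding cmat_vec_def by (intro sum_mono order_trans[OF norm_sum]) (simp add: norm_mult)
    also have "\<dots> \<le> (\<Sum>i<nr. \<Sum>j<nc. cmod (M i j))"
      using order_trans[OF norm_le_cvec_norm that] by (intro sum_mono mult_left_le) auto
    finally show ?thesis .
  qed
  then show "bdd_above {cvec_norm nr (cmat_vec nc M x) | x. cvec_norm nc x \<le> 1}"
    by (intro bdd_aboveI) blast
qed (use assms in blast)

lemma copnorm_least:
  assumes "\<And>x. cvec_norm nc x \<le> 1 \<Longrightarrow> cvec_norm nr (cmat_vec nc M x) \<le> c"
  shows "copnorm nr nc M \<le> c"
  unfolding copnorm_eq_Sup
proof (rule cSup_least)
  have "cvec_norm nc (\<lambda>_. 0) \<le> 1"
    by simp
  then show "{cvec_norm nr (cmat_vec nc M x) | x. cvec_norm nc x \<le> 1} \<noteq> {}"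
    by blast
qed (use assms in auto)

lemma copnorm_nonneg: "0 \<le> copnorm nr nc M"
  using copnorm_upper[of nc "\<lambda>_. 0" nr M] by (simp add: cmat_vec_def)

lemma cmat_vec_norm_le: "cvec_norm nr (cmat_vec nc M x) \<le> copnorm nr nc M * cvec_norm nc x"
proof (cases "cvec_norm nc x = 0")
  case True
  then have "cmat_vec nc M x = (\<lambda>_. 0)"
    by (simp add: cmat_vec_def cvec_norm_eq_0_iff)
  then show ?thesis
    using True by simp
next
  case False
  define t where "t = cvec_norm nc x"
  have "t > 0"
    using False cvec_norm_nonneg[of nc x] by (simp add: t_def)
  then have "cvec_norm nc (\<lambda>j. of_real (1 / t) * x j) \<le> 1"
    unfolding cvec_norm_scale norm_of_real by (simp add: t_def)
  then have "cvec_norm nr (cmat_vec nc M (\<lambda>j. of_real (1 / t) * x j)) \<le> copnorm nr nc M"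
    by (rule copnorm_upper)
  then have "cvec_norm nr (cmat_vec nc M x) / t \<le> copnorm nr nc M"
    using \<open>t > 0\<close> unfolding cmat_vec_scale cvec_norm_scale norm_of_real by simp
  then show ?thesis
    using \<open>t > 0\<close> by (simp add: t_def pos_divide_le_eq)
qed

lemma cmat_adj_vec_norm_le: "cvec_norm nc (cmat_adj_vec nr M y) \<le> copnorm nr nc M * cvec_norm nr y"
proof -
  define u where "u = cmat_adj_vec nr M y"
  have "(cvec_norm nc u)\<^sup>2 = Re (cvec_inner nr (cmat_vec nc M u) y)"
    by (simp add: power2_cvec_norm cvec_inner_cmat_vec u_def)
  also have "\<dots> \<le> cvec_norm nr (cmat_vec nc M u) * cvec_norm nr y"
    by (rule order_trans[OF complex_Re_le_cmod cvec_inner_cauchy_schwarz])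
  also have "\<dots> \<le> copnorm nr nc M * cvec_norm nc u * cvec_norm nr y"
    by (intro mult_right_mono cmat_vec_norm_le cvec_norm_nonneg)
  finally have "cvec_norm nc u * cvec_norm nc u \<le> copnorm nr nc M * cvec_norm nr y * cvec_norm nc u"
    by (simp add: power2_eq_square mult_ac)
  then show ?thesis
    using cvec_norm_nonneg[of nc u] copnorm_nonneg[of nr nc M] cvec_norm_nonneg[of nr y]
    unfolding u_def[symmetric]
    by (metis mult_nonneg_nonneg mult_right_le_imp_le order.strict_iff_order)
qed

(* With a = |M|^2 and g_i = <v, (M^H M)^i v>, the hypotheses say that a - t, (a - t)^2 and
   (a - t)^3 have nonnegative integrals against the spectral measure of M^H M at v; the last two
   come from |(a - M^H M) v|^2 >= 0 and |M (a - M^H M) v|^2 <= a |(a - M^H M) v|^2.  The identity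
   in the proof is the Taylor expansion of t (1 - mu t)^2 at t = a, whose coefficients are
   nonnegative when 3 mu a <= 1. *)
lemma cubic_moment_bound:
  fixes \<mu> a g0 g1 g2 g3 :: real
  assumes "0 \<le> \<mu>" and "3 * \<mu> * a \<le> 1"
    and "g1 \<le> a * g0"
    and "0 \<le> a\<^sup>2 * g0 - 2 * a * g1 + g2"
    and "a\<^sup>2 * g1 - 2 * a * g2 + g3 \<le> a * (a\<^sup>2 * g0 - 2 * a * g1 + g2)"
  shows "g1 - 2 * \<mu> * g2 + \<mu>\<^sup>2 * g3 \<le> a * (1 - \<mu> * a)\<^sup>2 * g0"
proof -
  define c1 where "c1 = (1 - \<mu> * a) * (1 - 3 * \<mu> * a)"
  define c2 where "c2 = \<mu> * (2 - 3 * \<mu> * a)"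
  have "a * (1 - \<mu> * a)\<^sup>2 * g0 - (g1 - 2 * \<mu> * g2 + \<mu>\<^sup>2 * g3)
     = c1 * (a * g0 - g1) + c2 * (a\<^sup>2 * g0 - 2 * a * g1 + g2)
       + \<mu>\<^sup>2 * (a * (a\<^sup>2 * g0 - 2 * a * g1 + g2) - (a\<^sup>2 * g1 - 2 * a * g2 + g3))"
    unfolding c1_def c2_def by algebra
  moreover have "0 \<le> c1" "0 \<le> c2"
    using assms(1,2) unfolding c1_def c2_def by (auto intro!: mult_nonneg_nonneg)
  ultimately show ?thesis
    using assms(3-5) by (smt (verit) mult_nonneg_nonneg zero_le_power2)
qed

lemma power2_cmat_vec_norm_le:
  "(cvec_norm nr (cmat_vec nc M x))\<^sup>2 \<le> (copnorm nr nc M)\<^sup>2 * (cvec_norm nc x)\<^sup>2"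
  by (metis cmat_vec_norm_le cvec_norm_nonneg power_mono power_mult_distrib)

lemma cmat_vec_gram_step_norm_le:
  fixes \<mu> :: real
  assumes "0 \<le> \<mu>" and "3 * \<mu> * (copnorm nr nc M)\<^sup>2 \<le> 1" and "cvec_norm nc v \<le> 1"
  shows "cvec_norm nr (\<lambda>i. cmat_vec nc M v i
           - \<mu> * cmat_vec nc M (cmat_adj_vec nr M (cmat_vec nc M v)) i)
         \<le> copnorm nr nc M * (1 - \<mu> * (copnorm nr nc M)\<^sup>2)"
proof -
  define s where "s = copnorm nr nc M"
  define a where "a = s\<^sup>2"
  define w where "w = cmat_vec nc M v"
  define u where "u = cmat_adj_vec nr M w"
  define z where "z = cmat_vec nc M u"
  have "cvec_inner nr w z = cnj (cvec_inner nc u u)"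
    using cvec_inner_cmat_vec[of nr nc M u w] cnj_cvec_inner[of nr z w] by (simp add: u_def z_def)
  then have inner_wz: "Re (cvec_inner nr w z) = (cvec_norm nc u)\<^sup>2"
    by (simp add: power2_cvec_norm)
  have inner_vu: "Re (cvec_inner nc v u) = (cvec_norm nr w)\<^sup>2"
    by (simp add: power2_cvec_norm cvec_inner_cmat_vec u_def w_def)
  have step: "(cvec_norm nr (\<lambda>i. w i - \<mu> * z i))\<^sup>2
      = (cvec_norm nr w)\<^sup>2 - 2 * \<mu> * (cvec_norm nc u)\<^sup>2 + \<mu>\<^sup>2 * (cvec_norm nr z)\<^sup>2"
    using power2_cvec_norm_diff[of nr 1 w \<mu> z] inner_wz by simp
  have shifted: "(cvec_norm nc (\<lambda>j. a * v j - u j))\<^sup>2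
      = a\<^sup>2 * (cvec_norm nc v)\<^sup>2 - 2 * a * (cvec_norm nr w)\<^sup>2 + (cvec_norm nc u)\<^sup>2"
    using power2_cvec_norm_diff[of nc a v 1 u] inner_vu by simp
  have shifted_image: "(cvec_norm nr (\<lambda>i. a * w i - z i))\<^sup>2
      = a\<^sup>2 * (cvec_norm nr w)\<^sup>2 - 2 * a * (cvec_norm nc u)\<^sup>2 + (cvec_norm nr z)\<^sup>2"
    using power2_cvec_norm_diff[of nr a w 1 z] inner_wz by simp
  have "cmat_vec nc M (\<lambda>j. a * v j - u j) = (\<lambda>i. a * w i - z i)"
    using cmat_vec_diff[of nc M a v 1 u] by (simp add: w_def z_def)
  then have shifted_le: "(cvec_norm nr (\<lambda>i. a * w i - z i))\<^sup>2 \<le> a * (cvec_norm nc (\<lambda>j. a * v j - u j))\<^sup>2"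
    using power2_cmat_vec_norm_le[of nr nc M "\<lambda>j. a * v j - u j"]
    unfolding s_def[symmetric] a_def[symmetric] by (simp only:)
  have w_le: "(cvec_norm nr w)\<^sup>2 \<le> a * (cvec_norm nc v)\<^sup>2"
    unfolding a_def s_def w_def by (rule power2_cmat_vec_norm_le)
  have "3 * \<mu> * a \<le> 1"
    using assms(2) by (simp add: a_def s_def)
  from cubic_moment_bound[OF assms(1) this w_le
      zero_le_power2[of "cvec_norm nc (\<lambda>j. a * v j - u j)", unfolded shifted]
      shifted_le[unfolded shifted shifted_image]]
  have "(cvec_norm nr (\<lambda>i. w i - \<mu> * z i))\<^sup>2 \<le> a * (1 - \<mu> * a)\<^sup>2 * (cvec_norm nc v)\<^sup>2"
    unfolding step .
  also have "\<dots> \<le> a * (1 - \<mu> * a)\<^sup>2"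
    using assms(3) cvec_norm_nonneg[of nc v] by (simp add: a_def mult_left_le power_le_one)
  also have "\<dots> = (s * (1 - \<mu> * a))\<^sup>2"
    by (simp add: a_def power_mult_distrib)
  finally have "cvec_norm nr (\<lambda>i. w i - \<mu> * z i) \<le> s * (1 - \<mu> * a)"
    using \<open>3 * \<mu> * a \<le> 1\<close> assms(1) copnorm_nonneg[of nr nc M]
    by (elim power2_le_imp_le) (simp add: s_def)
  then show ?thesis
    unfolding a_def s_def w_def z_def u_def .
qed

lemma gradient_step_arith:
  fixes s x \<mu> :: real
  assumes "0 \<le> s" and "s \<le> 3 * x" and "0 \<le> \<mu>" and "\<mu> * x\<^sup>2 \<le> 1 / 27"
  shows "s * (1 - \<mu> * s\<^sup>2) + 2 * \<mu> * x\<^sup>2 * s \<le> 3 * x"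
proof (cases "2 * x\<^sup>2 \<le> s\<^sup>2")
  case True
  have "s * (1 - \<mu> * s\<^sup>2) + 2 * \<mu> * x\<^sup>2 * s = s - \<mu> * s * (s\<^sup>2 - 2 * x\<^sup>2)"
    by (simp add: algebra_simps)
  also have "\<dots> \<le> s"
    using True assms(1,3) by simp
  finally show ?thesis
    using assms(2) by linarith
next
  case False
  have "0 \<le> x"
    using assms(1,2) by linarith
  have "(3 / 2 * x)\<^sup>2 = 9 / 4 * x\<^sup>2"
    by (simp add: power2_eq_square)
  then have "s\<^sup>2 < (3 / 2 * x)\<^sup>2"
    using False zero_le_power2[of x] by linarith
  then have "s < 3 / 2 * x"
    by (rule power_less_imp_less_base) (use \<open>0 \<le> x\<close> in simp)
  moreover have "2 * \<mu> * x\<^sup>2 * s \<le> 2 / 27 * s"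
    using mult_right_mono[OF assms(4) assms(1)] by (simp add: mult_ac)
  moreover have "s * (1 - \<mu> * s\<^sup>2) \<le> s"
    using assms(1,3) by (simp add: mult_left_le)
  ultimately show ?thesis
    using assms(1) by linarith
qed

lemma cvec_norm_add_scale_le:
  fixes \<mu> :: real and x y z :: "nat \<Rightarrow> complex"
  assumes "0 \<le> \<mu>"
  shows "cvec_norm n (\<lambda>i. x i + \<mu> * (y i + z i)) \<le> cvec_norm n x + \<mu> * (cvec_norm n y + cvec_norm n z)"
proof -
  have "cvec_norm n (\<lambda>i. x i + \<mu> * (y i + z i)) \<le> cvec_norm n x + \<mu> * cvec_norm n (\<lambda>i. y i + z i)"
    using cvec_norm_triangle[of n x "\<lambda>i. \<mu> * (y i + z i)"] assms by (simp add: cvec_norm_scale)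
  also have "\<dots> \<le> cvec_norm n x + \<mu> * (cvec_norm n y + cvec_norm n z)"
    using assms by (simp add: mult_left_mono cvec_norm_triangle)
  finally show ?thesis .
qed

lemma cmat_gradient_step_norm_le:
  fixes \<mu> :: real
  assumes "0 \<le> \<mu>" and "\<mu> \<le> 1 / (27 * (copnorm nr m X)\<^sup>2)"
    and "copnorm nr nc M \<le> 3 * copnorm nr m X"
    and "copnorm nr nr E \<le> (copnorm nr m X)\<^sup>2"
    and "cvec_norm nc v \<le> 1"
  shows "cvec_norm nr (\<lambda>i. (cmat_vec nc M v i
             - \<mu> * cmat_vec nc M (cmat_adj_vec nr M (cmat_vec nc M v)) i)
           + \<mu> * (cmat_vec nr E (cmat_vec nc M v) i
             + cmat_vec m X (cmat_adj_vec nr X (cmat_vec nc M v)) i))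
         \<le> 3 * copnorm nr m X"
proof -
  define s where "s = copnorm nr nc M"
  define x where "x = copnorm nr m X"
  define w where "w = cmat_vec nc M v"
  have "0 \<le> s" "0 \<le> x"
    unfolding s_def x_def by (rule copnorm_nonneg)+
  have step_size: "\<mu> * x\<^sup>2 \<le> 1 / 27"
  proof (cases "x = 0")
    case False
    then show ?thesis
      using assms(2) by (simp add: x_def field_simps)
  qed simp
  have w_le: "cvec_norm nr w \<le> s"
    using cmat_vec_norm_le[of nr nc M v] assms(5) \<open>0 \<le> s\<close> unfolding s_def w_def
    by (metis mult_left_le order_trans)
  have "s\<^sup>2 \<le> (3 * x)\<^sup>2"
    using assms(3) \<open>0 \<le> s\<close> unfolding s_def x_def by (rule power_mono)
  then have "\<mu> * s\<^sup>2 \<le> \<mu> * (3 * x)\<^sup>2"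
    using assms(1) by (rule mult_left_mono)
  then have "3 * \<mu> * s\<^sup>2 \<le> 1"
    using step_size by (simp add: power_mult_distrib)
  then have gram: "cvec_norm nr (\<lambda>i. w i - \<mu> * cmat_vec nc M (cmat_adj_vec nr M w) i)
      \<le> s * (1 - \<mu> * s\<^sup>2)"
    using cmat_vec_gram_step_norm_le[OF assms(1) _ assms(5)] by (simp add: s_def w_def)
  have error: "cvec_norm nr (cmat_vec nr E w) \<le> x\<^sup>2 * s"
    using cmat_vec_norm_le[of nr nr E w] assms(4) w_le \<open>0 \<le> s\<close>
    by (metis copnorm_nonneg cvec_norm_nonneg mult_mono x_def order_trans)
  have signal: "cvec_norm nr (cmat_vec m X (cmat_adj_vec nr X w)) \<le> x\<^sup>2 * s"
  proof -
    have "cvec_norm nr (cmat_vec m X (cmat_adj_vec nr X w)) \<le> x * (x * cvec_norm nr w)"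
      using cmat_vec_norm_le[of nr m X] cmat_adj_vec_norm_le[of m nr X w] \<open>0 \<le> x\<close>
      by (metis mult_left_mono order_trans x_def)
    also have "\<dots> \<le> x\<^sup>2 * s"
      using w_le \<open>0 \<le> x\<close> by (simp add: power2_eq_square mult_left_mono mult.assoc)
    finally show ?thesis .
  qed
  have "cvec_norm nr (\<lambda>i. (w i - \<mu> * cmat_vec nc M (cmat_adj_vec nr M w) i)
      + \<mu> * (cmat_vec nr E w i + cmat_vec m X (cmat_adj_vec nr X w) i))
      \<le> cvec_norm nr (\<lambda>i. w i - \<mu> * cmat_vec nc M (cmat_adj_vec nr M w) i)
        + \<mu> * (cvec_norm nr (cmat_vec nr E w) + cvec_norm nr (cmat_vec m X (cmat_adj_vec nr X w)))"
    by (rule cvec_norm_add_scale_le[OF assms(1)])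
  also have "\<dots> \<le> s * (1 - \<mu> * s\<^sup>2) + \<mu> * (x\<^sup>2 * s + x\<^sup>2 * s)"
    using gram error signal assms(1) by (intro add_mono mult_left_mono) auto
  also have "\<dots> \<le> 3 * x"
    using gradient_step_arith[OF \<open>0 \<le> s\<close> _ assms(1) step_size] assms(3)
    by (simp add: s_def x_def mult_ac)
  finally show ?thesis
    unfolding w_def x_def .
qed

lemma power_mod_of_power_eq_1:
  fixes x :: "'a :: monoid_mult"
  assumes "x ^ k = 1"
  shows "x ^ (m mod k) = x ^ m"
proof -
  have "x ^ m = x ^ (m mod k + k * (m div k))"
    by simp
  also have "\<dots> = x ^ (m mod k) * (x ^ k) ^ (m div k)"
    by (simp only: power_add power_mult)
  finally show ?thesis
    using assms by simp
qed

definition dft_root :: "nat \<Rightarrow> nat \<Rightarrow> complex" where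
  "dft_root k j = cis (- 2 * pi * real j / real k)"

lemma fslice_eq_sum_power: "fslice k T j i i' = (\<Sum>j'<k. of_real (T i i' j') * dft_root k j ^ j')"
  unfolding fslice_def dft_root_def Complex.DeMoivre by (simp add: algebra_simps)

lemma dft_root_power_period:
  assumes "0 < k"
  shows "dft_root k j ^ k = 1"
proof -
  have "real k * (- 2 * pi * real j / real k) = 2 * pi * (- real j)"
    using assms by simp
  then show ?thesis
    unfolding dft_root_def Complex.DeMoivre by (simp only: cis_multiple_2pi Ints_minus Ints_of_nat)
qed

lemma dft_root_power_mod:
  assumes "0 < k"
  shows "dft_root k j ^ (m mod k) = dft_root k j ^ m"
  using assms by (intro power_mod_of_power_eq_1 dft_root_power_period)

lemma dft_root_power_reflect:
  assumes "0 < k" and "m < k"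
  shows "dft_root k j ^ ((k - m) mod k) = cnj (dft_root k j ^ m)"
proof -
  have "dft_root k j ^ m * dft_root k j ^ (k - m) = 1"
    using assms by (simp add: power_add[symmetric] dft_root_power_period)
  then have "dft_root k j ^ (k - m) = inverse (dft_root k j ^ m)"
    by (metis inverse_unique)
  also have "\<dots> = cnj (dft_root k j ^ m)"
    unfolding dft_root_def Complex.DeMoivre by (simp add: cis_cnj)
  finally show ?thesis
    using assms(1) by (simp add: dft_root_power_mod)
qed

lemma dft_root_power_shift:
  assumes "0 < k" and "l < k"
  shows "(\<Sum>j'<k. of_real (f ((j' + k - l) mod k)) * dft_root k j ^ j')
       = dft_root k j ^ l * (\<Sum>m<k. of_real (f m) * dft_root k j ^ m)"
proof -
  have "dft_root k j ^ l * (\<Sum>m<k. of_real (f m) * dft_root k j ^ m)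
      = (\<Sum>m<k. of_real (f m) * dft_root k j ^ ((m + l) mod k))"
    using assms(1) by (simp add: sum_distrib_left dft_root_power_mod power_add mult_ac)
  also have "\<dots> = (\<Sum>j'<k. of_real (f ((j' + k - l) mod k)) * dft_root k j ^ j')"
  proof (rule sum.reindex_bij_witness[where i="\<lambda>j'. (j' + k - l) mod k" and j="\<lambda>m. (m + l) mod k"])
    fix j' assume "j' \<in> {..<k}"
    have "((j' + k - l) mod k + l) mod k = (j' + k - l + l) mod k"
      by (rule mod_add_left_eq)
    then have "((j' + k - l) mod k + l) mod k = (j' + k) mod k"
      using assms(2) by simp
    then show "((j' + k - l) mod k + l) mod k = j'"
      using \<open>j' \<in> {..<k}\<close> by simp
  next
    fix m assume "m \<in> {..<k}"
    have "((m + l) mod k + k - l) mod k = ((m + l) mod k + (k - l)) mod k"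
      using assms(2) by simp
    also have "\<dots> = (m + l + (k - l)) mod k"
      by (rule mod_add_left_eq)
    also have "\<dots> = (m + k) mod k"
      using assms(2) by simp
    finally show "((m + l) mod k + k - l) mod k = m"
      using \<open>m \<in> {..<k}\<close> by simp
    then show "of_real (f (((m + l) mod k + k - l) mod k)) * dft_root k j ^ ((m + l) mod k)
        = of_real (f m) * dft_root k j ^ ((m + l) mod k)"
      by simp
  qed (use assms(1) in auto)
  finally show ?thesis ..
qed

lemma fslice_tprod:
  assumes "0 < k"
  shows "fslice k (tprod k m A B) j i i' = (\<Sum>p<m. fslice k A j i p * fslice k B j p i')"
proof -
  have "fslice k (tprod k m A B) j i i'
      = (\<Sum>j'<k. \<Sum>p<m. \<Sum>l<k.
           of_real (A i p l) * of_real (B p i' ((j' + k - l) mod k)) * dft_root k j ^ j')"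
    unfolding fslice_eq_sum_power tprod_def by (simp only: of_real_sum of_real_mult sum_distrib_right)
  also have "\<dots> = (\<Sum>p<m. \<Sum>l<k. \<Sum>j'<k.
           of_real (A i p l) * of_real (B p i' ((j' + k - l) mod k)) * dft_root k j ^ j')"
    by (subst sum.swap) (rule sum.cong[OF refl sum.swap])
  also have "\<dots> = (\<Sum>p<m. \<Sum>l<k. of_real (A i p l)
           * (\<Sum>j'<k. of_real (B p i' ((j' + k - l) mod k)) * dft_root k j ^ j'))"
    by (simp only: sum_distrib_left mult.assoc)
  also have "\<dots> = (\<Sum>p<m. \<Sum>l<k. of_real (A i p l) * dft_root k j ^ l * fslice k B j p i')"
    using assms by (intro sum.cong refl) (simp add: dft_root_power_shift fslice_eq_sum_power)
  also have "\<dots> = (\<Sum>p<m. fslice k A j i p * fslice k B j p i')"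
    by (simp only: fslice_eq_sum_power sum_distrib_right)
  finally show ?thesis .
qed

lemma fslice_ttrans:
  assumes "0 < k"
  shows "fslice k (ttrans k X) j i i' = cnj (fslice k X j i' i)"
proof -
  have reflect: "(k - (k - m) mod k) mod k = m" if "m < k" for m
    using that by (cases "m = 0") simp_all
  have "fslice k (ttrans k X) j i i'
      = (\<Sum>m<k. of_real (X i' i ((k - m) mod k)) * dft_root k j ^ m)"
    unfolding fslice_eq_sum_power ttrans_def ..
  also have "\<dots> = (\<Sum>m<k. of_real (X i' i m) * cnj (dft_root k j ^ m))"
    using assms reflect
    by (intro sum.reindex_bij_witness[where i="\<lambda>m. (k - m) mod k" and j="\<lambda>m. (k - m) mod k"])
      (auto simp: dft_root_power_reflect)
  also have "\<dots> = cnj (fslice k X j i' i)"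
    by (simp add: fslice_eq_sum_power)
  finally show ?thesis .
qed

lemma fslice_tid:
  assumes "0 < k"
  shows "fslice k tid j i i' = (if i = i' then 1 else 0)"
proof -
  have "fslice k tid j i i' = (\<Sum>j'<k. if j' = 0 then (if i = i' then 1 else 0) else 0)"
    unfolding fslice_eq_sum_power tid_def by (intro sum.cong) auto
  then show ?thesis
    using assms by simp
qed

lemma fslice_add:
  "fslice k (\<lambda>i i' j. A i i' j + B i i' j) j i i' = fslice k A j i i' + fslice k B j i i'"
  by (simp add: fslice_def sum.distrib algebra_simps)

lemma fslice_diff:
  "fslice k (\<lambda>i i' j. A i i' j - B i i' j) j i i' = fslice k A j i i' - fslice k B j i i'"
  by (simp add: fslice_def sum_subtractf algebra_simps)

lemma fslice_scale:
  "fslice k (\<lambda>i i' j. c * A i i' j) j i i' = of_real c * fslice k A j i i'"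
  by (simp add: fslice_def sum_distrib_left algebra_simps)

lemma sum_lessThan_mult_single_block:
  fixes f :: "nat \<Rightarrow> 'a::comm_monoid_add"
  assumes "J < k" and "\<And>c. c < m * k \<Longrightarrow> c div m \<noteq> J \<Longrightarrow> f c = 0"
  shows "(\<Sum>c<m * k. f c) = (\<Sum>c'<m. f (J * m + c'))"
proof -
  have "J * m + m \<le> m * k"
    using assms(1) by (metis Suc_leI mult.commute mult_Suc mult_le_mono2 add.commute)
  then have block: "(+) (J * m) ` {..<m} \<subseteq> {..<m * k}"
    by auto
  have "f c = 0" if "c \<in> {..<m * k} - (+) (J * m) ` {..<m}" for c
  proof (rule assms(2))
    show "c < m * k"
      using that by simp
    show "c div m \<noteq> J"
    proof
      assume "c div m = J"
      moreover have "0 < m"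
        using \<open>c < m * k\<close> by (cases m) auto
      ultimately have "c = J * m + c mod m" and "c mod m < m"
        using div_mult_mod_eq[of c m] by simp_all
      then show False
        using that by (metis image_eqI lessThan_iff Diff_iff)
    qed
  qed
  then have "(\<Sum>c<m * k. f c) = (\<Sum>c\<in>(+) (J * m) ` {..<m}. f c)"
    using block by (intro sum.mono_neutral_right) auto
  also have "\<dots> = (\<Sum>c'<m. f (J * m + c'))"
    by (simp add: sum.reindex)
  finally show ?thesis .
qed

lemma bdiag_tprod:
  assumes "0 < k" and "a < n * k"
  shows "bdiag k n R (tprod k m A B) a b = (\<Sum>c<m * k. bdiag k n m A a c * bdiag k m R B c b)"
proof -
  define J where "J = a div n"
  have "J < k"
    unfolding J_def using assms(2) by (simp add: less_mult_imp_div_less mult.commute)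
  have "(\<Sum>c<m * k. bdiag k n m A a c * bdiag k m R B c b)
      = (\<Sum>c'<m. bdiag k n m A a (J * m + c') * bdiag k m R B (J * m + c') b)"
    using \<open>J < k\<close> by (rule sum_lessThan_mult_single_block) (auto simp: bdiag_def J_def)
  also have "\<dots> = (if J = b div R then (\<Sum>c'<m. fslice k A J (a mod n) c' * fslice k B J c' (b mod R)) else 0)"
    by (auto simp: bdiag_def J_def intro!: sum.cong)
  also have "\<dots> = bdiag k n R (tprod k m A B) a b"
    unfolding bdiag_def J_def using fslice_tprod[OF assms(1)] by simp
  finally show ?thesis ..
qed

lemma cmat_vec_bdiag_tprod:
  assumes "0 < k" and "a < n * k"
  shows "cmat_vec (R * k) (bdiag k n R (tprod k m A B)) v a
       = cmat_vec (m * k) (bdiag k n m A) (cmat_vec (R * k) (bdiag k m R B) v) a"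
  using assms
  by (simp add: cmat_vec_def bdiag_tprod sum_distrib_left sum_distrib_right mult.assoc
      sum.swap[of _ "{..<R * k}"])

lemma cmat_vec_bdiag_ttrans:
  assumes "0 < k"
  shows "cmat_vec (n * k) (bdiag k r n (ttrans k X)) w = cmat_adj_vec (n * k) (bdiag k n r X) w"
  using assms by (auto simp: cmat_vec_def cmat_adj_vec_def bdiag_def fslice_ttrans intro!: sum.cong)

lemma cmat_vec_bdiag_tid:
  assumes "0 < k" and "a < n * k"
  shows "cmat_vec (n * k) (bdiag k n n tid) w a = w a"
proof -
  have identity: "bdiag k n n tid a c = (if c = a then 1 else 0)" for c
    using assms(1) by (auto simp: bdiag_def fslice_tid) (metis div_mult_mod_eq)
  have "cmat_vec (n * k) (bdiag k n n tid) w a = (\<Sum>c<n * k. if c = a then w c else 0)"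
    unfolding cmat_vec_def by (intro sum.cong) (simp_all add: identity)
  also have "\<dots> = w a"
    using assms(2) by simp
  finally show ?thesis .
qed

lemma bdiag_add:
  "bdiag k n p (\<lambda>i i' j. A i i' j + B i i' j) a b = bdiag k n p A a b + bdiag k n p B a b"
  by (simp add: bdiag_def fslice_add)

lemma bdiag_diff:
  "bdiag k n p (\<lambda>i i' j. A i i' j - B i i' j) a b = bdiag k n p A a b - bdiag k n p B a b"
  by (simp add: bdiag_def fslice_diff)

lemma bdiag_scale:
  "bdiag k n p (\<lambda>i i' j. c * A i i' j) a b = of_real c * bdiag k n p A a b"
  by (simp add: bdiag_def fslice_scale)

lemma cmat_vec_bdiag_gradient_step:
  fixes k n r R a :: nat and X U F :: tensor and \<mu> :: real and v :: "nat \<Rightarrow> complex"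
  assumes "0 < k" and "a < n * k"
  defines "XX \<equiv> tprod k r X (ttrans k X)" and "UU \<equiv> tprod k R U (ttrans k U)"
    and "w \<equiv> cmat_vec (R * k) (bdiag k n R U) v"
  shows "cmat_vec (R * k) (bdiag k n R (tprod k n (\<lambda>i i' j. tid i i' j + \<mu> * F i i' j) U)) v a
       = (w a - \<mu> * cmat_vec (R * k) (bdiag k n R U) (cmat_adj_vec (n * k) (bdiag k n R U) w) a)
         + \<mu> * (cmat_vec (n * k) (bdiag k n n (\<lambda>i i' j. F i i' j - (XX i i' j - UU i i' j))) w a
           + cmat_vec (r * k) (bdiag k n r X) (cmat_adj_vec (n * k) (bdiag k n r X) w) a)"
proof -
  define E where "E = (\<lambda>i i' j. F i i' j - (XX i i' j - UU i i' j))"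
  have "F = (\<lambda>i i' j. E i i' j + (XX i i' j - UU i i' j))"
    by (simp add: E_def)
  then have "cmat_vec (n * k) (bdiag k n n (\<lambda>i i' j. tid i i' j + \<mu> * F i i' j)) w a
      = cmat_vec (n * k) (bdiag k n n tid) w a + \<mu> * (cmat_vec (n * k) (bdiag k n n E) w a
        + cmat_vec (n * k) (bdiag k n n XX) w a - cmat_vec (n * k) (bdiag k n n UU) w a)"
    by (simp add: cmat_vec_def bdiag_add bdiag_scale bdiag_diff sum.distrib sum_subtractf
        sum_distrib_left algebra_simps)
  moreover have "cmat_vec (n * k) (bdiag k n n XX) w a
      = cmat_vec (r * k) (bdiag k n r X) (cmat_adj_vec (n * k) (bdiag k n r X) w) a"
    unfolding XX_def cmat_vec_bdiag_tprod[OF assms(1,2)] cmat_vec_bdiag_ttrans[OF assms(1)] ..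
  moreover have "cmat_vec (n * k) (bdiag k n n UU) w a
      = cmat_vec (R * k) (bdiag k n R U) (cmat_adj_vec (n * k) (bdiag k n R U) w) a"
    unfolding UU_def cmat_vec_bdiag_tprod[OF assms(1,2)] cmat_vec_bdiag_ttrans[OF assms(1)] ..
  ultimately show ?thesis
    using cmat_vec_bdiag_tprod[OF assms(1,2)] cmat_vec_bdiag_tid[OF assms(1,2)]
    by (simp add: E_def w_def algebra_simps)
qed

theorem lemma16:
  fixes n r R k N :: nat and X U :: tensor and As :: "nat \<Rightarrow> tensor" and \<mu> :: real
  assumes "k > 0"
    and "\<forall>q<N. tubal_sym n k (As q)"
    and "0 \<le> \<mu>"
    and "tnorm k n R U \<le> 3 * tnorm k n r X"
    and "\<mu> \<le> 1 / (27 * (tnorm k n r X)^2)"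
    and "tnorm k n n (\<lambda>i i' j.
           AstarA n k N As (\<lambda>a b c. tprod k r X (ttrans k X) a b c - tprod k R U (ttrans k U) a b c) i i' j
           - (tprod k r X (ttrans k X) i i' j - tprod k R U (ttrans k U) i i' j))
         \<le> (tnorm k n r X)^2"
  shows "tnorm k n R
           (tprod k n
              (\<lambda>i i' j. tid i i' j + \<mu> * AstarA n k N As
                 (\<lambda>a b c. tprod k r X (ttrans k X) a b c - tprod k R U (ttrans k U) a b c) i i' j)
              U)
         \<le> 3 * tnorm k n r X"
  unfolding tnorm_def
proof (rule copnorm_least)
  fix v
  assume "cvec_norm (R * k) v \<le> 1"
  with assms(3-6) show "cvec_norm (n * k) (cmat_vec (R * k) (bdiag k n R (tprod k n
      (\<lambda>i i' j. tid i i' j + \<mu> * AstarA n k N As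
         (\<lambda>a b c. tprod k r X (ttrans k X) a b c - tprod k R U (ttrans k U) a b c) i i' j) U)) v)
    \<le> 3 * copnorm (n * k) (r * k) (bdiag k n r X)"
    unfolding tnorm_def
    by (subst cvec_norm_cong[OF cmat_vec_bdiag_gradient_step[OF assms(1)]])
      (auto intro: cmat_gradient_step_norm_le)
qed

end
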